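(* Let $\gamma(z)=\sum_{n=1}^{\infty} z^{n-1}\left(\frac{1}{n}-\log\frac{n+1}{n}\right)$ for $|z|\le 1$. If $|z|\le 1$, then $$\gamma(z)=\int_0^1\int_0^1\frac{1-x}{(1-xyz)(-\log xy)}\,dx\,dy=\int_0^1\frac{1-x+\log x}{(1-xz)\log x}\,dx.$$ Both integrals converge for all $z\in\mathbb{C}\setminus(1,\infty)$, and they provide the analytic continuation of $\gamma(z)$ to $z\in\mathbb{C}\setminus[1,\infty)$.
   Context: Here $\log$ denotes the natural logarithm (for $z\ne0$, the principal branch $\log z=\ln|z|+i\,\mathrm{Arg}\,z$, $-\pi<\mathrm{Arg}\,z\le\pi$). *)

theory Defs
  imports "HOL-Complex_Analysis.Complex_Analysis"
begin

definition gamma_term :: "complex \<Rightarrow> nat \<Rightarrow> complex" where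
  "gamma_term z n = z ^ (n - 1) * of_real (1 / real n - ln (real (n + 1) / real n))"

definition gen_gamma :: "complex \<Rightarrow> complex" where
  "gen_gamma z = (\<Sum>n. gamma_term z (Suc n))"

definition dbl_integrand :: "complex \<Rightarrow> real \<times> real \<Rightarrow> complex" where
  "dbl_integrand z p = (case p of (x, y) \<Rightarrow>
     of_real (1 - x) / ((1 - of_real (x * y) * z) * of_real (- ln (x * y))))"

definition sgl_integrand :: "complex \<Rightarrow> real \<Rightarrow> complex" where
  "sgl_integrand z x = of_real (1 - x + ln x) / ((1 - of_real x * z) * of_real (ln x))"

definition dbl_integral :: "complex \<Rightarrow> complex" where
  "dbl_integral z = set_lebesgue_integral lborel ({0..1} \<times> {0..1}) (dbl_integrand z)"

definition sgl_integral :: "complex \<Rightarrow> complex" where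
  "sgl_integral z = set_lebesgue_integral lborel {0..1} (sgl_integrand z)"

end

(*
  Both integrands have the form phi(p) / (1 - t(p) z) with a weight phi >= 0 and t(p) in [0,1]:
  t = x on [0,1] and t = xy on the unit square.  Expanding the geometric series turns each
  integral into the power series whose coefficients are the moments of phi against t^n.
  Writing 1/(-log u) as the integral of u^s over s >= 0 and using Tonelli, both families of
  moments equal 1/(n+1) - log((n+2)/(n+1)), the coefficients of gamma(z); being nonnegative with
  sum Euler's constant, they justify termwise integration on the closed unit disc.  Off (1,oo) the kernel
  is dominated by a multiple of phi/(1-t), whose integral is the sum of the moments, and off
  [1,oo) the second-order Taylor remainder of the kernel is uniformly bounded, which gives
  holomorphy.
*)
theory Submission
  imports Defs "HOL-Real_Asymp.Real_Asymp"
begin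

section \<open>Elementary integrals\<close>

lemma nn_integral_powr_unit_interval:
  fixes p :: real
  assumes "p > -1"
  shows "(\<integral>\<^sup>+x\<in>{0..1}. ennreal (x powr p) \<partial>lborel) = ennreal (1 / (p + 1))"
proof -
  have "((\<lambda>x. x powr p) has_integral 1 / (p + 1)) {0..1}"
    using has_integral_powr_from_0[OF assms, of 1] by simp
  from nn_integral_has_integral_lebesgue[OF _ this] show ?thesis
    by (simp add: mult.commute ennreal_mult' ennreal_indicator)
qed

lemma nn_integral_powr_one_minus_unit_interval:
  fixes p :: real
  assumes "p > -1"
  shows "(\<integral>\<^sup>+x\<in>{0..1}. ennreal (x powr p * (1 - x)) \<partial>lborel) = ennreal (1 / (p + 1) - 1 / (p + 2))"
proof -
  have "((\<lambda>x. x powr p - x powr (p + 1)) has_integral 1 / (p + 1) - 1 / (p + 2)) {0..1}"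
    using has_integral_diff[OF has_integral_powr_from_0[OF assms, of 1] has_integral_powr_from_0[of "p + 1" 1]]
      assms by (simp add: add.assoc)
  then have "((\<lambda>x. x powr p * (1 - x)) has_integral 1 / (p + 1) - 1 / (p + 2)) {0..1}"
    by (rule has_integral_eq[rotated]) (auto simp: powr_add algebra_simps)
  from nn_integral_has_integral_lebesgue[OF _ this] show ?thesis
    by (simp add: mult.commute ennreal_mult' ennreal_indicator)
qed

lemma nn_integral_powr_atLeast_0:
  fixes u :: real
  assumes "0 < u" "u < 1"
  shows "(\<integral>\<^sup>+s\<in>{0..}. ennreal (u powr s) \<partial>lborel) = ennreal (1 / - ln u)"
proof -
  have "(\<integral>\<^sup>+s\<in>{0..}. ennreal (u powr s) \<partial>lborel) = 0 - u powr 0 / ln u"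
  proof (rule nn_integral_FTC_atLeast)
    show "DERIV (\<lambda>s. u powr s / ln u) s :> u powr s" for s
      using assms by (auto intro!: derivative_eq_intros)
    show "((\<lambda>s. u powr s / ln u) \<longlongrightarrow> 0) at_top"
      using assms by real_asymp
  qed auto
  then show ?thesis
    using assms by simp
qed

lemma ennreal_divide_neg_ln_eq_nn_integral:
  fixes u c :: real
  assumes "0 \<le> u" "u \<le> 1" "0 \<le> c" "u = 1 \<Longrightarrow> c = 0"
  shows "ennreal (c / - ln u) = (\<integral>\<^sup>+s\<in>{0..}. ennreal (c * u powr s) \<partial>lborel)"
proof (cases "u = 0 \<or> u = 1")
  case False
  then have "0 < u" "u < 1"
    using assms by auto
  have "(\<integral>\<^sup>+s\<in>{0..}. ennreal (c * u powr s) \<partial>lborel) = ennreal c * (\<integral>\<^sup>+s\<in>{0..}. ennreal (u powr s) \<partial>lborel)"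
    using assms by (subst nn_integral_cmult[symmetric]) (auto simp: ennreal_mult mult.assoc)
  also have "\<dots> = ennreal (c / - ln u)"
    using \<open>0 < u\<close> \<open>u < 1\<close> assms by (simp add: nn_integral_powr_atLeast_0 ennreal_mult[symmetric])
  finally show ?thesis ..
qed (use assms in auto)

(* For u p = 0 both sides vanish, since ln 0 = 0 and 0 powr s = 0. *)
lemma nn_integral_divide_neg_ln:
  fixes g u :: "'a \<Rightarrow> real"
  assumes "sigma_finite_measure M"
    and [measurable]: "S \<in> sets M" "g \<in> borel_measurable M" "u \<in> borel_measurable M"
    and "\<And>p. p \<in> S \<Longrightarrow> 0 \<le> g p" "\<And>p. p \<in> S \<Longrightarrow> 0 \<le> u p \<and> u p \<le> 1"
    and "\<And>p. p \<in> S \<Longrightarrow> u p = 1 \<Longrightarrow> g p = 0"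
  shows "(\<integral>\<^sup>+p\<in>S. ennreal (g p / - ln (u p)) \<partial>M)
       = (\<integral>\<^sup>+s\<in>{0..}. (\<integral>\<^sup>+p\<in>S. ennreal (g p * u p powr s) \<partial>M) \<partial>lborel)"
proof -
  interpret pair_sigma_finite lborel M
    using assms(1) by (simp add: pair_sigma_finite_def lborel.sigma_finite_measure_axioms)
  have "(\<integral>\<^sup>+p\<in>S. ennreal (g p / - ln (u p)) \<partial>M)
      = (\<integral>\<^sup>+p. (\<integral>\<^sup>+s. ennreal (g p * u p powr s) * indicator {0..} s * indicator S p \<partial>lborel) \<partial>M)"
  proof (intro nn_integral_cong)
    fix p
    show "ennreal (g p / - ln (u p)) * indicator S p
        = (\<integral>\<^sup>+s. ennreal (g p * u p powr s) * indicator {0..} s * indicator S p \<partial>lborel)"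
      using ennreal_divide_neg_ln_eq_nn_integral[of "u p" "g p"] assms
      by (cases "p \<in> S") (simp_all add: nn_integral_multc)
  qed
  also have "\<dots> = (\<integral>\<^sup>+s\<in>{0..}. (\<integral>\<^sup>+p\<in>S. ennreal (g p * u p powr s) \<partial>M) \<partial>lborel)"
    by (subst Fubini') (auto intro!: nn_integral_cong simp: mult_ac split: split_indicator)
  finally show ?thesis .
qed

lemma nn_integral_lborel_prod_mult:
  fixes f :: "'a::euclidean_space \<Rightarrow> ennreal" and g :: "'b::euclidean_space \<Rightarrow> ennreal"
  assumes [measurable]: "f \<in> borel_measurable borel" "g \<in> borel_measurable borel"
  shows "(\<integral>\<^sup>+p. f (fst p) * g (snd p) \<partial>lborel) = (\<integral>\<^sup>+x. f x \<partial>lborel) * (\<integral>\<^sup>+y. g y \<partial>lborel)"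
proof -
  have "(\<integral>\<^sup>+p. f (fst p) * g (snd p) \<partial>lborel) = (\<integral>\<^sup>+x. (\<integral>\<^sup>+y. f x * g y \<partial>lborel) \<partial>lborel)"
    by (simp add: lborel_prod[symmetric] lborel.nn_integral_fst[symmetric])
  also have "\<dots> = (\<integral>\<^sup>+x. f x \<partial>lborel) * (\<integral>\<^sup>+y. g y \<partial>lborel)"
    by (simp add: nn_integral_cmult nn_integral_multc)
  finally show ?thesis .
qed

lemma nn_integral_inverse_diff_atLeast_0:
  fixes c :: real
  assumes "c > 0"
  shows "(\<integral>\<^sup>+s\<in>{0..}. ennreal (1 / (s + c) - 1 / (s + c + 1)) \<partial>lborel) = ennreal (ln ((c + 1) / c))"
proof -
  have "(\<integral>\<^sup>+s\<in>{0..}. ennreal (1 / (s + c) - 1 / (s + c + 1)) \<partial>lborel)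
      = 0 - (ln (0 + c) - ln (0 + c + 1))"
  proof (rule nn_integral_FTC_atLeast)
    show "DERIV (\<lambda>s. ln (s + c) - ln (s + c + 1)) s :> 1 / (s + c) - 1 / (s + c + 1)" if "0 \<le> s" for s
      using that assms by (auto intro!: derivative_eq_intros simp: field_simps)
    show "0 \<le> 1 / (s + c) - 1 / (s + c + 1)" if "0 \<le> s" for s
      using that assms by (simp add: field_simps)
    show "((\<lambda>s. ln (s + c) - ln (s + c + 1)) \<longlongrightarrow> 0) at_top"
      using assms by real_asymp
  qed auto
  then show ?thesis
    using assms by (simp add: ln_div)
qed

lemma nn_integral_inverse_diff_divide_atLeast_0:
  fixes c :: real
  assumes "c > 0"
  shows "(\<integral>\<^sup>+s\<in>{0..}. ennreal ((1 / (s + c) - 1 / (s + c + 1)) / (s + c)) \<partial>lborel)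
       = ennreal (1 / c - ln ((c + 1) / c))"
proof -
  have "(\<integral>\<^sup>+s\<in>{0..}. ennreal ((1 / (s + c) - 1 / (s + c + 1)) / (s + c)) \<partial>lborel)
      = 0 - (- 1 / (0 + c) - ln (0 + c) + ln (0 + c + 1))"
  proof (rule nn_integral_FTC_atLeast)
    show "DERIV (\<lambda>s. - 1 / (s + c) - ln (s + c) + ln (s + c + 1)) s :> (1 / (s + c) - 1 / (s + c + 1)) / (s + c)"
      if "0 \<le> s" for s
    proof -
      have pos: "0 < s + c"
        using that assms by linarith
      have "DERIV (\<lambda>s. - 1 / (s + c) - ln (s + c) + ln (s + c + 1)) s
          :> 1 / (s + c)\<^sup>2 - 1 / (s + c) + 1 / (s + c + 1)"
        using pos by (auto intro!: derivative_eq_intros simp: power2_eq_square field_simps)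
      also have "1 / (s + c)\<^sup>2 - 1 / (s + c) + 1 / (s + c + 1) = (1 / (s + c) - 1 / (s + c + 1)) / (s + c)"
        using pos by (simp add: divide_simps power2_eq_square) (simp add: algebra_simps)
      finally show ?thesis .
    qed
    show "0 \<le> (1 / (s + c) - 1 / (s + c + 1)) / (s + c)" if "0 \<le> s" for s
      using that assms by (simp add: field_simps)
    show "((\<lambda>s. - 1 / (s + c) - ln (s + c) + ln (s + c + 1)) \<longlongrightarrow> 0) at_top"
      using assms by real_asymp
  qed auto
  then show ?thesis
    using assms by (simp add: ln_div algebra_simps)
qed

lemma power_mult_powr:
  fixes x s :: real
  assumes "0 \<le> x"
  shows "x ^ n * x powr s = x powr (real n + s)"
  using assms by (cases "x = 0") (auto simp: powr_add powr_realpow)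

lemma set_nn_integral_unit_interval_open:
  "(\<integral>\<^sup>+x\<in>{0..1}. f x \<partial>lborel) = (\<integral>\<^sup>+x\<in>{0<..<1::real}. f x \<partial>lborel)"
proof (rule nn_integral_cong_AE)
  show "AE x in lborel. f x * indicator {0..1} x = f x * indicator {0<..<1} x"
    using AE_lborel_singleton[of 0] AE_lborel_singleton[of 1]
    by eventually_elim (auto split: split_indicator)
qed

lemma mult_eq_1_unit_interval:
  fixes x y :: real
  assumes "x \<in> {0..1}" "y \<in> {0..1}" "x * y = 1"
  shows "x = 1"
proof -
  have "x * y \<le> x"
    using assms by (intro mult_left_le) auto
  then show ?thesis
    using assms by auto
qed

lemma measurable_fst_snd_borel [measurable]:
  "fst \<in> borel_measurable (borel :: ('a::second_countable_topology \<times> 'b::second_countable_topology) measure)"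
  "snd \<in> borel_measurable (borel :: ('a::second_countable_topology \<times> 'b::second_countable_topology) measure)"
  by (subst borel_prod[symmetric], simp)+

section \<open>The kernel 1 / (1 - t z) for t in [0,1]\<close>

lemma norm_one_minus_mult_bounded_below:
  fixes w :: complex
  assumes "w \<notin> {complex_of_real r | r. r \<ge> 1}"
  obtains c where "c > 0" "\<And>r z. r \<in> {0..1} \<Longrightarrow> dist z w < c \<Longrightarrow> c \<le> cmod (1 - of_real r * z)"
proof -
  have "\<exists>r0\<in>{0..1}. \<forall>r\<in>{0..1}. cmod (1 - of_real r0 * w) \<le> cmod (1 - of_real r * w)"
    by (rule continuous_attains_inf) (auto intro!: continuous_intros)
  then obtain r0 where r0: "r0 \<in> {0..1}"
    and min: "\<And>r. r \<in> {0..1} \<Longrightarrow> cmod (1 - of_real r0 * w) \<le> cmod (1 - of_real r * w)"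
    by blast
  have "1 - of_real r0 * w \<noteq> 0"
  proof
    assume zero: "1 - of_real r0 * w = 0"
    then have "r0 \<noteq> 0"
      by auto
    with zero have "w = of_real (1 / r0)"
      by (simp add: field_simps)
    moreover have "1 / r0 \<ge> 1"
      using r0 \<open>r0 \<noteq> 0\<close> by (simp add: field_simps)
    ultimately show False
      using assms by blast
  qed
  define c where "c = cmod (1 - of_real r0 * w) / 2"
  show thesis
  proof
    show "c > 0"
      using \<open>1 - of_real r0 * w \<noteq> 0\<close> by (simp add: c_def)
    fix r :: real and z :: complex
    assume r: "r \<in> {0..1}" and "dist z w < c"
    have "cmod (of_real r * (z - w)) \<le> dist z w"
      using r by (simp add: norm_mult dist_norm mult_left_le_one_le)
    moreover have "cmod (1 - of_real r * w) \<le> cmod (1 - of_real r * z) + cmod (of_real r * (z - w))"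
      using norm_triangle_ineq[of "1 - of_real r * z" "of_real r * (z - w)"] by (simp add: algebra_simps)
    ultimately show "c \<le> cmod (1 - of_real r * z)"
      using min[OF r] \<open>dist z w < c\<close> by (simp add: c_def)
  qed
qed

lemma norm_one_minus_mult_ge_linear:
  fixes z :: complex
  assumes "z \<notin> {complex_of_real r | r. r > 1}"
  obtains c where "c > 0" "\<And>r. r \<in> {0..1} \<Longrightarrow> c * (1 - r) \<le> cmod (1 - of_real r * z)"
proof (cases "z = 1")
  case True
  have "1 * (1 - r) \<le> cmod (1 - of_real r * z)" if "r \<in> {0..1}" for r
  proof -
    have "1 - of_real r * z = of_real (1 - r)"
      using True by simp
    then show ?thesis
      using that by (simp only: norm_of_real) simp
  qed
  then show thesis
    by (intro that[of 1]) simp_all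
next
  case False
  have "z \<notin> {complex_of_real r | r. r \<ge> 1}"
  proof
    assume "z \<in> {complex_of_real r | r. r \<ge> 1}"
    then obtain r where r: "z = of_real r" "r \<ge> 1"
      by blast
    with False have "r > 1"
      by (cases "r = 1") auto
    with r assms show False
      by blast
  qed
  then obtain c where "c > 0"
    and c: "\<And>r z'. r \<in> {0..1} \<Longrightarrow> dist z' z < c \<Longrightarrow> c \<le> cmod (1 - of_real r * z')"
    using norm_one_minus_mult_bounded_below by blast
  have "c * (1 - r) \<le> cmod (1 - of_real r * z)" if "r \<in> {0..1}" for r
  proof -
    have "c * (1 - r) \<le> c"
      using \<open>c > 0\<close> that by (intro mult_left_le) auto
    also have "c \<le> cmod (1 - of_real r * z)"
      using c[OF that, of z] \<open>c > 0\<close> by simp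
    finally show ?thesis .
  qed
  then show thesis
    by (rule that[OF \<open>c > 0\<close>])
qed

lemma inverse_one_minus_mult_remainder:
  fixes x t z w :: "'a::field"
  assumes "1 - t * z \<noteq> 0" "1 - t * w \<noteq> 0"
  shows "x / (1 - t * z) - x / (1 - t * w) - (z - w) * (x * t / (1 - t * w)\<^sup>2)
       = (z - w)\<^sup>2 * (x * t\<^sup>2 / ((1 - t * z) * (1 - t * w)\<^sup>2))"
proof -
  define A B where "A = 1 - t * z" and "B = 1 - t * w"
  have "A \<noteq> 0" "B \<noteq> 0" and d: "B - A = t * (z - w)"
    using assms by (simp_all add: A_def B_def algebra_simps)
  have "x / A - x / B - (z - w) * (x * t / B\<^sup>2) = (z - w)\<^sup>2 * (x * t\<^sup>2 / (A * B\<^sup>2))"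
    using \<open>A \<noteq> 0\<close> \<open>B \<noteq> 0\<close> d by (simp add: field_simps power2_eq_square) algebra
  then show ?thesis
    by (simp add: A_def B_def)
qed

lemma norm_of_real_mult_power_divide_le:
  fixes q :: "'a::real_normed_field"
  assumes "0 \<le> x" "0 \<le> \<tau>" "\<tau> \<le> 1" "0 < b" "b \<le> norm q"
  shows "norm (of_real (x * \<tau> ^ m) / q) \<le> x / b"
proof -
  have "x * \<tau> ^ m \<le> x"
    using assms by (simp add: mult_left_le power_le_one)
  then have "x * \<tau> ^ m / norm q \<le> x / b"
    using assms by (intro frac_le) auto
  moreover have "norm (of_real (x * \<tau> ^ m) / q) = x * \<tau> ^ m / norm q"
    using assms by (simp add: norm_divide norm_mult norm_power)
  ultimately show ?thesis
    by simp
qed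

section \<open>Transforms of weights with summable moments\<close>

locale moment_transform =
  fixes M :: "'a measure" and S :: "'a set" and \<phi> t :: "'a \<Rightarrow> real" and a :: "nat \<Rightarrow> real"
  assumes sets_S [measurable]: "S \<in> sets M"
    and measurable_weight [measurable]: "\<phi> \<in> borel_measurable M"
    and measurable_t [measurable]: "t \<in> borel_measurable M"
    and weight_nonneg: "\<And>p. p \<in> S \<Longrightarrow> 0 \<le> \<phi> p"
    and t_bounds: "\<And>p. p \<in> S \<Longrightarrow> 0 \<le> t p \<and> t p \<le> 1"
    and weight_vanishes: "\<And>p. p \<in> S \<Longrightarrow> t p = 1 \<Longrightarrow> \<phi> p = 0"
    and moments: "\<And>n. (\<integral>\<^sup>+p\<in>S. ennreal (\<phi> p * t p ^ n) \<partial>M) = ennreal (a n)"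
    and moments_nonneg: "\<And>n. 0 \<le> a n"
    and summable_moments: "summable a"
begin

definition kernel :: "complex \<Rightarrow> 'a \<Rightarrow> complex" where
  "kernel z p = of_real (\<phi> p) / (1 - of_real (t p) * z)"

definition transform :: "complex \<Rightarrow> complex" where
  "transform z = (LINT p:S|M. kernel z p)"

lemma measurable_kernel [measurable]: "kernel z \<in> borel_measurable M"
  unfolding kernel_def by measurable

lemma set_integrable_moment: "set_integrable M S (\<lambda>p. \<phi> p * t p ^ n)"
  and set_integral_moment: "(LINT p:S|M. \<phi> p * t p ^ n) = a n"
proof -
  have "(\<integral>\<^sup>+p. ennreal (indicator S p *\<^sub>R (\<phi> p * t p ^ n)) \<partial>M) = ennreal (a n)"
    using moments[of n] by (simp add: ennreal_mult' ennreal_indicator mult.commute)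
  then have "integrable M (\<lambda>p. indicator S p *\<^sub>R (\<phi> p * t p ^ n))
      \<and> (LINT p|M. indicator S p *\<^sub>R (\<phi> p * t p ^ n)) = a n"
    by (subst (asm) nn_integral_eq_integrable)
      (auto simp: weight_nonneg t_bounds moments_nonneg split: split_indicator)
  then show "set_integrable M S (\<lambda>p. \<phi> p * t p ^ n)" "(LINT p:S|M. \<phi> p * t p ^ n) = a n"
    by (simp_all add: set_integrable_def set_lebesgue_integral_def)
qed

lemma summable_weight_power:
  assumes "p \<in> S"
  shows "summable (\<lambda>n. \<phi> p * t p ^ n)"
proof (cases "t p = 1")
  case False
  then have "norm (t p) < 1"
    using t_bounds[OF assms] by auto
  then show ?thesis
    by (intro summable_mult summable_geometric)
qed (simp add: weight_vanishes[OF assms])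

lemma kernel_sums:
  assumes "p \<in> S" "cmod z \<le> 1"
  shows "(\<lambda>n. of_real (\<phi> p * t p ^ n) * z ^ n) sums kernel z p"
proof (cases "t p = 1")
  case False
  have "t p * cmod z \<le> t p"
    using assms(2) t_bounds[OF assms(1)] by (simp add: mult_left_le)
  then have "norm (of_real (t p) * z) < 1"
    using False t_bounds[OF assms(1)] by (simp add: norm_mult)
  from sums_mult[OF geometric_sums[OF this], where c = "of_real (\<phi> p)"] show ?thesis
    by (simp add: kernel_def power_mult_distrib divide_inverse mult_ac)
qed (simp add: kernel_def weight_vanishes[OF assms(1)])

lemma integrable_moment_term:
  "integrable M (\<lambda>p. indicator S p *\<^sub>R (of_real (\<phi> p * t p ^ n) * z ^ n :: complex))"
  and integral_moment_term:
  "(\<integral>p. indicator S p *\<^sub>R (of_real (\<phi> p * t p ^ n) * z ^ n :: complex) \<partial>M) = z ^ n * of_real (a n)"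
proof -
  have eq: "(\<lambda>p. indicator S p *\<^sub>R (of_real (\<phi> p * t p ^ n) * z ^ n :: complex))
      = (\<lambda>p. of_real (indicator S p *\<^sub>R (\<phi> p * t p ^ n)) * z ^ n)"
    by (auto simp: fun_eq_iff split: split_indicator)
  show "integrable M (\<lambda>p. indicator S p *\<^sub>R (of_real (\<phi> p * t p ^ n) * z ^ n :: complex))"
    using set_integrable_moment[of n] unfolding eq set_integrable_def
    by (intro integrable_mult_left integrable_of_real)
  show "(\<integral>p. indicator S p *\<^sub>R (of_real (\<phi> p * t p ^ n) * z ^ n :: complex) \<partial>M) = z ^ n * of_real (a n)"
    using set_integral_moment[of n]
    unfolding eq integral_mult_left_zero integral_complex_of_real
    by (simp add: set_lebesgue_integral_def mult.commute)
qed

lemma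
  assumes "cmod z \<le> 1"
  shows summable_norm_moment_term:
      "AE p in M. summable (\<lambda>n. norm (indicator S p *\<^sub>R (of_real (\<phi> p * t p ^ n) * z ^ n :: complex)))"
    and summable_integral_norm_moment_term:
      "summable (\<lambda>n. \<integral>p. norm (indicator S p *\<^sub>R (of_real (\<phi> p * t p ^ n) * z ^ n :: complex)) \<partial>M)"
proof -
  have norm_eq: "norm (indicator S p *\<^sub>R (of_real (\<phi> p * t p ^ n) * z ^ n :: complex))
      = indicator S p * (\<phi> p * t p ^ n) * cmod z ^ n" for n p
    by (auto simp: norm_mult norm_power weight_nonneg t_bounds split: split_indicator)
  have le: "\<phi> p * t p ^ n * cmod z ^ n \<le> \<phi> p * t p ^ n" if "p \<in> S" for p n
    using weight_nonneg[OF that] t_bounds[OF that] assms by (intro mult_left_le power_le_one) auto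
  show "AE p in M. summable (\<lambda>n. norm (indicator S p *\<^sub>R (of_real (\<phi> p * t p ^ n) * z ^ n :: complex)))"
  proof (rule AE_I2)
    fix p
    show "summable (\<lambda>n. norm (indicator S p *\<^sub>R (of_real (\<phi> p * t p ^ n) * z ^ n :: complex)))"
    proof (cases "p \<in> S")
      case True
      show ?thesis
      proof (rule summable_comparison_test'[OF summable_weight_power[OF True]])
        fix n
        show "norm (norm (indicator S p *\<^sub>R (of_real (\<phi> p * t p ^ n) * z ^ n :: complex))) \<le> \<phi> p * t p ^ n"
          unfolding norm_eq using True le[OF True, of n] weight_nonneg[OF True] t_bounds[OF True] by simp
      qed
    qed simp
  qed
  have "(\<integral>p. norm (indicator S p *\<^sub>R (of_real (\<phi> p * t p ^ n) * z ^ n :: complex)) \<partial>M) = a n * cmod z ^ n" for n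
    unfolding norm_eq using set_integral_moment[of n] by (simp add: set_lebesgue_integral_def)
  moreover have "a n * cmod z ^ n \<le> a n" for n
    using assms moments_nonneg[of n] by (intro mult_left_le power_le_one) auto
  ultimately show "summable (\<lambda>n. \<integral>p. norm (indicator S p *\<^sub>R (of_real (\<phi> p * t p ^ n) * z ^ n :: complex)) \<partial>M)"
    by (intro summable_comparison_test'[OF summable_moments]) (simp add: moments_nonneg)
qed

lemma
  assumes "cmod z \<le> 1"
  shows set_integrable_kernel_disc: "set_integrable M S (kernel z)"
    and transform_sums: "(\<lambda>n. z ^ n * of_real (a n)) sums transform z"
proof -
  note series = integrable_moment_term summable_norm_moment_term[OF assms]
    summable_integral_norm_moment_term[OF assms]
  have "(\<lambda>p. \<Sum>n. indicator S p *\<^sub>R (of_real (\<phi> p * t p ^ n) * z ^ n)) = (\<lambda>p. indicator S p *\<^sub>R kernel z p)"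
    using kernel_sums[of _ z] assms by (auto simp: fun_eq_iff sums_iff split: split_indicator)
  with integrable_suminf[OF series] sums_integral[OF series]
  show "set_integrable M S (kernel z)" "(\<lambda>n. z ^ n * of_real (a n)) sums transform z"
    by (simp_all only: integral_moment_term set_integrable_def transform_def set_lebesgue_integral_def)
qed

lemma kernel_one: "kernel 1 p = of_real (\<phi> p / (1 - t p))"
  by (simp add: kernel_def)

lemma norm_kernel_le:
  assumes "p \<in> S" "c > 0" "c * (1 - t p) \<le> cmod (1 - of_real (t p) * z)"
  shows "norm (kernel z p) \<le> norm (kernel 1 p) / c"
proof (cases "t p = 1")
  case False
  then have pos: "0 < c * (1 - t p)"
    using assms(2) t_bounds[OF assms(1)] by simp
  then have "0 < cmod (1 - of_real (t p) * z) * (c * (1 - t p))"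
    using assms(3) by (meson mult_pos_pos order_less_le_trans)
  have "norm (kernel z p) = \<phi> p / cmod (1 - of_real (t p) * z)"
    using weight_nonneg[OF assms(1)] by (simp add: kernel_def norm_divide)
  also have "\<dots> \<le> \<phi> p / (c * (1 - t p))"
    using \<open>0 < cmod (1 - of_real (t p) * z) * (c * (1 - t p))\<close> assms(3) weight_nonneg[OF assms(1)]
    by (intro divide_left_mono) auto
  also have "\<dots> = norm (kernel 1 p) / c"
    unfolding kernel_one norm_of_real using pos weight_nonneg[OF assms(1)] t_bounds[OF assms(1)] by simp
  finally show ?thesis .
qed (simp add: kernel_def weight_vanishes[OF assms(1)])

lemma set_integrable_kernel:
  assumes "z \<notin> {complex_of_real r | r. r > 1}"
  shows "set_integrable M S (kernel z)"
proof -
  obtain c where "c > 0" and c: "\<And>r. r \<in> {0..1} \<Longrightarrow> c * (1 - r) \<le> cmod (1 - of_real r * z)"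
    using norm_one_minus_mult_ge_linear[OF assms] by blast
  show ?thesis
  proof (rule set_integrable_bound[where f = "\<lambda>p. kernel 1 p / of_real c"])
    show "set_integrable M S (\<lambda>p. kernel 1 p / of_real c)"
      using set_integrable_kernel_disc[of 1] by simp
    show "set_borel_measurable M S (kernel z)"
      unfolding set_borel_measurable_def by measurable
    show "AE p in M. p \<in> S \<longrightarrow> norm (kernel z p) \<le> norm (kernel 1 p / of_real c)"
      using norm_kernel_le c t_bounds \<open>c > 0\<close> by (simp add: norm_divide)
  qed
qed

lemma set_integrable_bounded_by_weight:
  fixes g :: "'a \<Rightarrow> complex"
  assumes [measurable]: "g \<in> borel_measurable M" and bound: "\<And>p. p \<in> S \<Longrightarrow> norm (g p) \<le> B * \<phi> p"
  shows "set_integrable M S g" and "norm (LINT p:S|M. g p) \<le> B * a 0"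
proof -
  have weight: "set_integrable M S \<phi>" "(LINT p:S|M. \<phi> p) = a 0"
    using set_integrable_moment[of 0] set_integral_moment[of 0] by simp_all
  have "norm (g p) \<le> norm (B * \<phi> p)" if "p \<in> S" for p
    using bound[OF that] weight_nonneg[OF that] mult_right_mono[OF abs_ge_self, of "\<phi> p" B]
    by (simp add: abs_mult)
  then show integrable: "set_integrable M S g"
    by (intro set_integrable_bound[OF set_integrable_mult_right[OF weight(1)]])
      (auto simp: set_borel_measurable_def)
  have "norm (LINT p:S|M. g p) \<le> (LINT p:S|M. norm (g p))"
    by (rule set_integral_norm_bound[OF integrable])
  also have "\<dots> \<le> (LINT p:S|M. B * \<phi> p)"
    using integrable weight bound by (intro set_integral_mono set_integrable_norm) auto
  also have "\<dots> = B * a 0"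
    using weight by simp
  finally show "norm (LINT p:S|M. g p) \<le> B * a 0" .
qed

lemma set_integrable_weight_power_divide:
  fixes q :: "'a \<Rightarrow> complex"
  assumes [measurable]: "q \<in> borel_measurable M"
    and "b > 0" and bound: "\<And>p. p \<in> S \<Longrightarrow> b \<le> norm (q p)"
  shows "set_integrable M S (\<lambda>p. of_real (\<phi> p * t p ^ m) / q p)"
    and "norm (LINT p:S|M. of_real (\<phi> p * t p ^ m) / q p) \<le> a 0 / b"
proof -
  have "norm (of_real (\<phi> p * t p ^ m) / q p) \<le> 1 / b * \<phi> p" if "p \<in> S" for p
    using norm_of_real_mult_power_divide_le[OF weight_nonneg[OF that] _ _ \<open>b > 0\<close> bound[OF that]]
      t_bounds[OF that] by simp
  from set_integrable_bounded_by_weight[OF _ this]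
  show "set_integrable M S (\<lambda>p. of_real (\<phi> p * t p ^ m) / q p)"
    and "norm (LINT p:S|M. of_real (\<phi> p * t p ^ m) / q p) \<le> a 0 / b"
    by simp_all
qed

lemma transform_remainder:
  assumes "c > 0"
    and z: "\<And>p. p \<in> S \<Longrightarrow> c \<le> cmod (1 - of_real (t p) * z)"
    and w: "\<And>p. p \<in> S \<Longrightarrow> c \<le> cmod (1 - of_real (t p) * w)"
  shows "transform z - transform w - (z - w) * (LINT p:S|M. of_real (\<phi> p * t p) / (1 - of_real (t p) * w)\<^sup>2)
       = (z - w)\<^sup>2 * (LINT p:S|M. of_real (\<phi> p * t p ^ 2) / ((1 - of_real (t p) * z) * (1 - of_real (t p) * w)\<^sup>2))"
proof -
  define H where "H p = of_real (\<phi> p * t p) / (1 - of_real (t p) * w)\<^sup>2" for p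
  have "set_integrable M S (kernel y)" if "\<And>p. p \<in> S \<Longrightarrow> c \<le> cmod (1 - of_real (t p) * y)" for y
    using set_integrable_weight_power_divide(1)[of "\<lambda>p. 1 - of_real (t p) * y" c 0] that \<open>c > 0\<close>
    by (simp add: kernel_def[abs_def])
  moreover have "set_integrable M S (\<lambda>p. of_real (\<phi> p * t p ^ 1) / (1 - of_real (t p) * w)\<^sup>2)"
    using w \<open>c > 0\<close> by (intro set_integrable_weight_power_divide(1)[of _ "c ^ 2"])
      (auto simp: norm_power intro: power_mono)
  then have "set_integrable M S H"
    by (simp add: H_def[abs_def])
  ultimately have "transform z - transform w - (z - w) * (LINT p:S|M. H p)
      = (LINT p:S|M. kernel z p - kernel w p - (z - w) * H p)"
    using z w by (simp add: transform_def set_integral_diff)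
  also have "\<dots> = (LINT p:S|M. (z - w)\<^sup>2 * (of_real (\<phi> p * t p ^ 2) / ((1 - of_real (t p) * z) * (1 - of_real (t p) * w)\<^sup>2)))"
  proof (rule set_lebesgue_integral_cong, simp, intro allI impI)
    fix p
    assume "p \<in> S"
    then have "1 - of_real (t p) * z \<noteq> 0" "1 - of_real (t p) * w \<noteq> 0"
      using z w \<open>c > 0\<close> by fastforce+
    then show "kernel z p - kernel w p - (z - w) * H p
        = (z - w)\<^sup>2 * (of_real (\<phi> p * t p ^ 2) / ((1 - of_real (t p) * z) * (1 - of_real (t p) * w)\<^sup>2))"
      unfolding kernel_def H_def of_real_mult of_real_power by (rule inverse_one_minus_mult_remainder)
  qed
  also have "\<dots> = (z - w)\<^sup>2 * (LINT p:S|M. of_real (\<phi> p * t p ^ 2) / ((1 - of_real (t p) * z) * (1 - of_real (t p) * w)\<^sup>2))"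
    by (rule set_integral_mult_right)
  finally show ?thesis
    by (simp only: H_def)
qed

lemma transform_has_field_derivative:
  assumes "w \<notin> {complex_of_real r | r. r \<ge> 1}"
  shows "(transform has_field_derivative
           (LINT p:S|M. of_real (\<phi> p * t p) / (1 - of_real (t p) * w)\<^sup>2)) (at w)"
proof -
  obtain c where "c > 0"
    and c: "\<And>r z. r \<in> {0..1} \<Longrightarrow> dist z w < c \<Longrightarrow> c \<le> cmod (1 - of_real r * z)"
    using norm_one_minus_mult_bounded_below[OF assms] by blast
  have near: "c \<le> cmod (1 - of_real (t p) * z)" if "p \<in> S" "dist z w < c" for p z
    using c[of "t p" z] t_bounds[OF that(1)] that(2) by simp
  define D where "D = (LINT p:S|M. of_real (\<phi> p * t p) / (1 - of_real (t p) * w)\<^sup>2)"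
  define R where "R z = (LINT p:S|M. of_real (\<phi> p * t p ^ 2) / ((1 - of_real (t p) * z) * (1 - of_real (t p) * w)\<^sup>2))"
    for z
  have "norm ((transform z - transform w) / (z - w) - D) \<le> cmod (z - w) * (a 0 / c ^ 3)"
    if "z \<noteq> w" "dist z w < c" for z
  proof -
    have "c ^ 3 \<le> cmod ((1 - of_real (t p) * z) * (1 - of_real (t p) * w)\<^sup>2)" if "p \<in> S" for p
    proof -
      have "c * (c * c) \<le> cmod (1 - of_real (t p) * z) * (cmod (1 - of_real (t p) * w) * cmod (1 - of_real (t p) * w))"
        using near[OF that \<open>dist z w < c\<close>] near[OF that, of w] \<open>c > 0\<close> by (intro mult_mono) auto
      then show ?thesis
        by (simp add: norm_mult norm_power power3_eq_cube power2_eq_square)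
    qed
    then have "norm (R z) \<le> a 0 / c ^ 3"
      unfolding R_def using \<open>c > 0\<close> by (intro set_integrable_weight_power_divide(2)) auto
    moreover have "(transform z - transform w) / (z - w) - D = (z - w) * R z"
      using transform_remainder[OF \<open>c > 0\<close> near[OF _ \<open>dist z w < c\<close>] near[of _ w]] \<open>c > 0\<close> \<open>z \<noteq> w\<close>
      by (simp add: D_def R_def field_simps power2_eq_square)
    moreover have "cmod (z - w) * cmod (R z) \<le> cmod (z - w) * (a 0 / c ^ 3)"
      using \<open>norm (R z) \<le> a 0 / c ^ 3\<close> by (intro mult_left_mono) auto
    ultimately show ?thesis
      by (simp add: norm_mult)
  qed
  then have "\<forall>\<^sub>F z in at w. norm ((transform z - transform w) / (z - w) - D) \<le> cmod (z - w) * (a 0 / c ^ 3)"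
    using \<open>c > 0\<close> by (auto simp: eventually_at)
  moreover have "((\<lambda>z. cmod (z - w) * (a 0 / c ^ 3)) \<longlongrightarrow> 0) (at w)"
    by (intro tendsto_eq_intros) auto
  ultimately have "((\<lambda>z. (transform z - transform w) / (z - w) - D) \<longlongrightarrow> 0) (at w)"
    by (rule Lim_null_comparison)
  then have "((\<lambda>z. (transform z - transform w) / (z - w)) \<longlongrightarrow> D) (at w)"
    by (rule LIM_zero_cancel)
  then show ?thesis
    unfolding has_field_derivative_iff D_def .
qed

lemma transform_holomorphic: "transform holomorphic_on - {complex_of_real r | r. r \<ge> 1}"
  using transform_has_field_derivative
  by (auto simp: holomorphic_on_def field_differentiable_def intro: has_field_derivative_at_within)

end

section \<open>The two integral representations\<close>

definition gamma_coeff :: "nat \<Rightarrow> real" where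
  "gamma_coeff n = 1 / (real n + 1) - ln ((real n + 2) / (real n + 1))"

lemma gamma_term_Suc: "gamma_term z (Suc n) = z ^ n * of_real (gamma_coeff n)"
  by (simp add: gamma_term_def gamma_coeff_def add_ac)

lemma gamma_coeff_nonneg: "0 \<le> gamma_coeff n"
proof -
  have "ln ((real n + 2) / (real n + 1)) = ln (1 + 1 / (real n + 1))"
    by (simp add: field_simps)
  also have "\<dots> \<le> 1 / (real n + 1)"
    by (rule ln_add_one_self_le_self) simp
  finally show ?thesis
    by (simp add: gamma_coeff_def)
qed

lemma gamma_coeff_sums_euler_mascheroni: "gamma_coeff sums euler_mascheroni"
proof -
  have "gamma_coeff n = inverse (real (n + 1)) + ln (real (n + 1)) - ln (real (n + 2))" for n
    by (simp add: gamma_coeff_def ln_div add_ac field_simps)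
  then show ?thesis
    using euler_mascheroni_sum_real by presburger
qed

definition single_weight :: "real \<Rightarrow> real" where
  "single_weight x = (1 - x + ln x) / ln x"

definition double_weight :: "real \<times> real \<Rightarrow> real" where
  "double_weight p = (1 - fst p) / - ln (fst p * snd p)"

lemma single_weight_nonneg:
  assumes "x \<in> {0..1}"
  shows "0 \<le> single_weight x"
proof (cases "x = 0")
  case False
  then have "0 < x"
    using assms by simp
  then show ?thesis
    using ln_le_minus_one[of x] assms by (simp add: single_weight_def divide_nonpos_nonpos)
qed (simp add: single_weight_def)

lemma double_weight_nonneg:
  assumes "p \<in> {0..1} \<times> {0..1}"
  shows "0 \<le> double_weight p"
proof -
  have "fst p * snd p \<le> 1"
    using assms by (auto intro: mult_le_one)
  then have "ln (fst p * snd p) \<le> 0"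
    using assms by (cases "fst p * snd p = 0") (auto simp: mem_Times_iff)
  then show ?thesis
    using assms by (auto simp: double_weight_def mem_Times_iff intro!: divide_nonneg_nonpos)
qed

lemma nn_integral_power_divide_neg_ln:
  "(\<integral>\<^sup>+x\<in>{0..1}. ennreal (x ^ n * (1 - x) / - ln x) \<partial>lborel)
     = ennreal (ln ((real n + 2) / (real n + 1)))"
proof -
  have "(\<integral>\<^sup>+x\<in>{0..1}. ennreal (x ^ n * (1 - x) / - ln x) \<partial>lborel)
      = (\<integral>\<^sup>+s\<in>{0..}. (\<integral>\<^sup>+x\<in>{0..1}. ennreal (x ^ n * (1 - x) * x powr s) \<partial>lborel) \<partial>lborel)"
    by (rule nn_integral_divide_neg_ln) (auto simp: lborel.sigma_finite_measure_axioms)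
  also have "\<dots> = (\<integral>\<^sup>+s\<in>{0..}. ennreal (1 / (s + (real n + 1)) - 1 / (s + (real n + 1) + 1)) \<partial>lborel)"
  proof (intro nn_integral_cong)
    fix s :: real
    have "(\<integral>\<^sup>+x\<in>{0..1}. ennreal (x ^ n * (1 - x) * x powr s) \<partial>lborel)
        = (\<integral>\<^sup>+x\<in>{0..1}. ennreal (x powr (real n + s) * (1 - x)) \<partial>lborel)"
      by (intro nn_integral_cong) (auto simp: power_mult_powr[symmetric] mult_ac split: split_indicator)
    also have "\<dots> = ennreal (1 / (s + (real n + 1)) - 1 / (s + (real n + 1) + 1))" if "0 \<le> s"
      using that by (subst nn_integral_powr_one_minus_unit_interval) (auto simp: add_ac)
    finally show "(\<integral>\<^sup>+x\<in>{0..1}. ennreal (x ^ n * (1 - x) * x powr s) \<partial>lborel) * indicator {0..} s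
        = ennreal (1 / (s + (real n + 1)) - 1 / (s + (real n + 1) + 1)) * indicator {0..} s"
      by (simp split: split_indicator)
  qed
  also have "\<dots> = ennreal (ln ((real n + 2) / (real n + 1)))"
    by (subst nn_integral_inverse_diff_atLeast_0) (auto simp: add_ac)
  finally show ?thesis .
qed

lemma nn_integral_single_weight_moment:
  "(\<integral>\<^sup>+x\<in>{0..1}. ennreal (single_weight x * x ^ n) \<partial>lborel) = ennreal (gamma_coeff n)"
proof -
  have split: "ennreal (x ^ n) = ennreal (single_weight x * x ^ n) + ennreal (x ^ n * (1 - x) / - ln x)"
    if "x \<in> {0<..<1}" for x
  proof -
    have "ln x < 0"
      using that by simp
    then have "x ^ n = single_weight x * x ^ n + x ^ n * (1 - x) / - ln x"
      by (simp add: single_weight_def field_simps)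
    then have "ennreal (x ^ n) = ennreal (single_weight x * x ^ n + x ^ n * (1 - x) / - ln x)"
      by (rule arg_cong)
    also have "\<dots> = ennreal (single_weight x * x ^ n) + ennreal (x ^ n * (1 - x) / - ln x)"
    proof (rule ennreal_plus)
      show "0 \<le> single_weight x * x ^ n"
        using that single_weight_nonneg[of x] by simp
      show "0 \<le> x ^ n * (1 - x) / - ln x"
        using that \<open>ln x < 0\<close> by (intro divide_nonneg_pos) auto
    qed
    finally show ?thesis .
  qed
  have "ennreal (1 / (real n + 1)) = (\<integral>\<^sup>+x\<in>{0..1}. ennreal (x powr n) \<partial>lborel)"
    by (simp add: nn_integral_powr_unit_interval)
  also have "\<dots> = (\<integral>\<^sup>+x\<in>{0<..<1}. ennreal (single_weight x * x ^ n) + ennreal (x ^ n * (1 - x) / - ln x) \<partial>lborel)"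
    unfolding set_nn_integral_unit_interval_open
    by (intro nn_integral_cong) (simp add: split powr_realpow split: split_indicator)
  also have "\<dots> = (\<integral>\<^sup>+x\<in>{0..1}. ennreal (single_weight x * x ^ n) \<partial>lborel)
      + ennreal (ln ((real n + 2) / (real n + 1)))"
    unfolding nn_integral_power_divide_neg_ln[symmetric] set_nn_integral_unit_interval_open distrib_right
    by (rule nn_integral_add) (auto simp: single_weight_def)
  finally have "ennreal (1 / (real n + 1))
      = (\<integral>\<^sup>+x\<in>{0..1}. ennreal (single_weight x * x ^ n) \<partial>lborel) + ennreal (ln ((real n + 2) / (real n + 1)))" .
  then show ?thesis
    using gamma_coeff_nonneg[of n] by (simp add: gamma_coeff_def ennreal_minus[symmetric])
qed

lemma nn_integral_unit_square_powr:
  fixes r :: real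
  assumes "r > -1"
  shows "(\<integral>\<^sup>+p\<in>{0..1} \<times> {0..1}. ennreal ((1 - fst p) * (fst p * snd p) powr r) \<partial>lborel)
       = ennreal ((1 / (r + 1) - 1 / (r + 2)) / (r + 1))"
proof -
  have "(\<integral>\<^sup>+p\<in>{0..1} \<times> {0..1}. ennreal ((1 - fst p) * (fst p * snd p) powr r) \<partial>lborel)
      = (\<integral>\<^sup>+p. (ennreal (fst p powr r * (1 - fst p)) * indicator {0..1} (fst p))
                * (ennreal (snd p powr r) * indicator {0..1} (snd p)) \<partial>lborel)"
  proof (intro nn_integral_cong)
    fix p :: "real \<times> real"
    show "ennreal ((1 - fst p) * (fst p * snd p) powr r) * indicator ({0..1} \<times> {0..1}) p
        = ennreal (fst p powr r * (1 - fst p)) * indicator {0..1} (fst p)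
          * (ennreal (snd p powr r) * indicator {0..1} (snd p))"
      by (cases p) (auto simp: powr_mult ennreal_mult[symmetric] mult_ac split: split_indicator)
  qed
  also have "\<dots> = (\<integral>\<^sup>+x\<in>{0..1}. ennreal (x powr r * (1 - x)) \<partial>lborel) * (\<integral>\<^sup>+y\<in>{0..1}. ennreal (y powr r) \<partial>lborel)"
    by (rule nn_integral_lborel_prod_mult) measurable
  also have "\<dots> = ennreal (1 / (r + 1) - 1 / (r + 2)) * ennreal (1 / (r + 1))"
    using assms by (simp add: nn_integral_powr_one_minus_unit_interval nn_integral_powr_unit_interval)
  also have "\<dots> = ennreal ((1 / (r + 1) - 1 / (r + 2)) / (r + 1))"
  proof -
    have "1 / (r + 2) \<le> 1 / (r + 1)"
      using assms by (intro divide_left_mono) auto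
    then show ?thesis
      using assms by (simp add: ennreal_mult[symmetric])
  qed
  finally show ?thesis .
qed

lemma nn_integral_double_weight_moment:
  "(\<integral>\<^sup>+p\<in>{0..1} \<times> {0..1}. ennreal (double_weight p * (fst p * snd p) ^ n) \<partial>lborel)
     = ennreal (gamma_coeff n)"
proof -
  let ?c = "real n + 1"
  have [measurable]: "{0..1::real} \<times> {0..1::real} \<in> sets borel"
    by (intro borel_closed closed_Times) auto
  have "(\<integral>\<^sup>+p\<in>{0..1} \<times> {0..1}. ennreal (double_weight p * (fst p * snd p) ^ n) \<partial>lborel)
      = (\<integral>\<^sup>+p\<in>{0..1} \<times> {0..1}. ennreal ((1 - fst p) * (fst p * snd p) ^ n / - ln (fst p * snd p)) \<partial>lborel)"
    by (simp add: double_weight_def)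
  also have "\<dots> = (\<integral>\<^sup>+s\<in>{0..}. (\<integral>\<^sup>+p\<in>{0..1} \<times> {0..1}.
                    ennreal ((1 - fst p) * (fst p * snd p) ^ n * (fst p * snd p) powr s) \<partial>lborel) \<partial>lborel)"
  proof (rule nn_integral_divide_neg_ln)
    fix p :: "real \<times> real"
    assume p: "p \<in> {0..1} \<times> {0..1}"
    then show "0 \<le> fst p * snd p \<and> fst p * snd p \<le> 1"
      by (auto simp: mem_Times_iff intro: mult_le_one)
    show "fst p * snd p = 1 \<Longrightarrow> (1 - fst p) * (fst p * snd p) ^ n = 0"
      using p mult_eq_1_unit_interval[of "fst p" "snd p"] by (auto simp: mem_Times_iff)
  qed (auto simp: lborel.sigma_finite_measure_axioms mem_Times_iff)
  also have "\<dots> = (\<integral>\<^sup>+s\<in>{0..}. ennreal ((1 / (s + ?c) - 1 / (s + ?c + 1)) / (s + ?c)) \<partial>lborel)"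
  proof (intro nn_integral_cong)
    fix s :: real
    have "(\<integral>\<^sup>+p\<in>{0..1} \<times> {0..1}. ennreal ((1 - fst p) * (fst p * snd p) ^ n * (fst p * snd p) powr s) \<partial>lborel)
        = (\<integral>\<^sup>+p\<in>{0..1} \<times> {0..1}. ennreal ((1 - fst p) * (fst p * snd p) powr (real n + s)) \<partial>lborel)"
      by (intro nn_integral_cong)
        (auto simp: power_mult_powr[symmetric] mult.assoc mem_Times_iff split: split_indicator)
    also have "\<dots> = ennreal ((1 / (s + ?c) - 1 / (s + ?c + 1)) / (s + ?c))" if "0 \<le> s"
      using that by (subst nn_integral_unit_square_powr) (auto simp: add_ac)
    finally show "(\<integral>\<^sup>+p\<in>{0..1} \<times> {0..1}. ennreal ((1 - fst p) * (fst p * snd p) ^ n * (fst p * snd p) powr s) \<partial>lborel)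
          * indicator {0..} s
        = ennreal ((1 / (s + ?c) - 1 / (s + ?c + 1)) / (s + ?c)) * indicator {0..} s"
      by (simp split: split_indicator)
  qed
  also have "\<dots> = ennreal (gamma_coeff n)"
    by (subst nn_integral_inverse_diff_divide_atLeast_0) (auto simp: gamma_coeff_def add_ac)
  finally show ?thesis .
qed

interpretation single: moment_transform lborel "{0..1::real}" single_weight "\<lambda>x. x" gamma_coeff
proof
  show "single_weight \<in> borel_measurable lborel"
    unfolding single_weight_def by measurable
  show "x = 1 \<Longrightarrow> single_weight x = 0" for x
    by (simp add: single_weight_def)
qed (auto simp: single_weight_nonneg nn_integral_single_weight_moment gamma_coeff_nonneg
    sums_summable[OF gamma_coeff_sums_euler_mascheroni])

interpretation double: moment_transform lborel "{0..1::real} \<times> {0..1::real}" double_weight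
  "\<lambda>p. fst p * snd p" gamma_coeff
proof
  show "{0..1::real} \<times> {0..1::real} \<in> sets lborel"
    by (simp add: borel_closed closed_Times)
  show "double_weight \<in> borel_measurable lborel"
    unfolding double_weight_def by measurable
  fix p :: "real \<times> real"
  assume p: "p \<in> {0..1} \<times> {0..1}"
  then show "0 \<le> fst p * snd p \<and> fst p * snd p \<le> 1"
    by (auto simp: mem_Times_iff intro: mult_le_one)
  show "fst p * snd p = 1 \<Longrightarrow> double_weight p = 0"
    using p mult_eq_1_unit_interval[of "fst p" "snd p"] by (auto simp: double_weight_def mem_Times_iff)
qed (auto simp: double_weight_nonneg nn_integral_double_weight_moment gamma_coeff_nonneg
    sums_summable[OF gamma_coeff_sums_euler_mascheroni])

lemma sgl_integrand_eq_kernel: "sgl_integrand z = single.kernel z"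
  by (auto simp: fun_eq_iff sgl_integrand_def single.kernel_def single_weight_def)

lemma sgl_integral_eq_transform: "sgl_integral = single.transform"
  by (simp add: fun_eq_iff sgl_integral_def single.transform_def sgl_integrand_eq_kernel)

lemma dbl_integrand_eq_kernel: "dbl_integrand z = double.kernel z"
  by (auto simp: fun_eq_iff dbl_integrand_def double.kernel_def double_weight_def)

lemma dbl_integral_eq_transform: "dbl_integral = double.transform"
  by (simp add: fun_eq_iff dbl_integral_def double.transform_def dbl_integrand_eq_kernel)

theorem theorem6:
  shows "(\<forall>z. cmod z \<le> 1 \<longrightarrow>
           summable (\<lambda>n. gamma_term z (Suc n)) \<and>
           gen_gamma z = dbl_integral z \<and> dbl_integral z = sgl_integral z) \<and>
         (\<forall>z. z \<notin> {complex_of_real t | t. t > 1} \<longrightarrow>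
           set_integrable lborel ({0..1} \<times> {0..1}) (dbl_integrand z) \<and>
           set_integrable lborel {0..1} (sgl_integrand z)) \<and>
         dbl_integral holomorphic_on (- {complex_of_real t | t. t \<ge> 1}) \<and>
         sgl_integral holomorphic_on (- {complex_of_real t | t. t \<ge> 1})"
proof (intro conjI allI impI)
  fix z :: complex
  assume "cmod z \<le> 1"
  then have dbl: "(\<lambda>n. gamma_term z (Suc n)) sums dbl_integral z"
    and sgl: "(\<lambda>n. gamma_term z (Suc n)) sums sgl_integral z"
    using double.transform_sums single.transform_sums
    by (simp_all add: gamma_term_Suc dbl_integral_eq_transform sgl_integral_eq_transform)
  show "summable (\<lambda>n. gamma_term z (Suc n))"
    using dbl by (rule sums_summable)
  show "gen_gamma z = dbl_integral z"
    using dbl by (simp add: gen_gamma_def sums_iff)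
  show "dbl_integral z = sgl_integral z"
    using dbl sgl by (rule sums_unique2)
next
  fix z :: complex
  assume "z \<notin> {complex_of_real t | t. t > 1}"
  then show "set_integrable lborel ({0..1} \<times> {0..1}) (dbl_integrand z)"
    and "set_integrable lborel {0..1} (sgl_integrand z)"
    by (simp_all add: dbl_integrand_eq_kernel sgl_integrand_eq_kernel
        double.set_integrable_kernel single.set_integrable_kernel)
qed (simp_all add: dbl_integral_eq_transform sgl_integral_eq_transform
    double.transform_holomorphic single.transform_holomorphic)

end
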